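(* Let $\Lambda=(\mathcal{L}\subset\mathbb{R}^s,\mathbb{R}^n)$ be a cut-and-project scheme, $L\in\mathbb{R}^{s\times s}$ a matrix associated to $\mathcal{L}$, and $Y=L^{-1}$ with columns $Y_{\bullet 1},\dots,Y_{\bullet s}$. Then $\Lambda$ is (i) non-degenerate if and only if $\mathrm{span}_\mathbb{C}\{Y_{\bullet n+1},\dots,Y_{\bullet s}\}\cap\mathbb{Q}^s=\{\mathbf{0}\}$; (ii) aperiodic if and only if $\mathrm{span}_\mathbb{C}\{Y_{\bullet 1},\dots,Y_{\bullet n}\}\cap\mathbb{Q}^s=\{\mathbf{0}\}$; (iii) irreducible if and only if there exists $\mathbf{y}\in\mathrm{span}_\mathbb{C}\{Y_{\bullet 1},\dots,Y_{\bullet n}\}$ such that $\mathbf{q}^\top\mathbf{y}\neq 0$ for all $\mathbf{q}\in\mathbb{Z}^s\setminus\{\mathbf{0}\}$.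
   Context: A lattice $\mathcal{L}\subset\mathbb{R}^s$ is $\{L\mathbf{r}:\mathbf{r}\in\mathbb{Z}^s\}$ for a non-singular $L\in\mathbb{R}^{s\times s}$. For $1\le n<s$ the cut-and-project scheme $(\mathcal{L}\subset\mathbb{R}^s,\mathbb{R}^n)$ has projections $\pi_\parallel(\mathbf{x})=(x_1,\dots,x_n)^\top$, $\pi_\perp(\mathbf{x})=(x_{n+1},\dots,x_s)^\top$. It is non-degenerate if $\pi_\parallel|_{\mathcal{L}}$ is injective, aperiodic if $\pi_\perp|_{\mathcal{L}}$ is injective, and irreducible if $\pi_\perp(\mathcal{L})$ is dense in $\mathbb{R}^{s-n}$. *)

theory Defs
  imports Complex_Main "Jordan_Normal_Form.Matrix"
begin

text \<open>Vectors in R^s are Jordan_Normal_Form vectors of dimension s (0-based indices).\<close>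

definition int_vecs :: "nat \<Rightarrow> real vec set" where
  "int_vecs s = {r \<in> carrier_vec s. \<forall>i<s. r $ i \<in> \<int>}"

definition lattice_of :: "nat \<Rightarrow> real mat \<Rightarrow> real vec set" where
  "lattice_of s L = {mult_mat_vec L r | r. r \<in> int_vecs s}"

definition pi_par :: "nat \<Rightarrow> real vec \<Rightarrow> real vec" where
  "pi_par n x = vec n (\<lambda>i. x $ i)"

definition pi_perp :: "nat \<Rightarrow> nat \<Rightarrow> real vec \<Rightarrow> real vec" where
  "pi_perp s n x = vec (s - n) (\<lambda>i. x $ (n + i))"

definition vdist :: "nat \<Rightarrow> real vec \<Rightarrow> real vec \<Rightarrow> real" where
  "vdist k x y = sqrt (\<Sum>i<k. (x $ i - y $ i)\<^sup>2)"

definition dense_in_Rk :: "nat \<Rightarrow> real vec set \<Rightarrow> bool" where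
  "dense_in_Rk k A \<longleftrightarrow> A \<subseteq> carrier_vec k \<and>
     (\<forall>x \<in> carrier_vec k. \<forall>e>0. \<exists>a\<in>A. vdist k a x < e)"

definition non_degenerate :: "nat \<Rightarrow> nat \<Rightarrow> real mat \<Rightarrow> bool" where
  "non_degenerate s n L \<longleftrightarrow> inj_on (pi_par n) (lattice_of s L)"

definition aperiodic :: "nat \<Rightarrow> nat \<Rightarrow> real mat \<Rightarrow> bool" where
  "aperiodic s n L \<longleftrightarrow> inj_on (pi_perp s n) (lattice_of s L)"

definition irreducible_cps :: "nat \<Rightarrow> nat \<Rightarrow> real mat \<Rightarrow> bool" where
  "irreducible_cps s n L \<longleftrightarrow> dense_in_Rk (s - n) (pi_perp s n ` lattice_of s L)"

definition cspan_cols :: "nat \<Rightarrow> real mat \<Rightarrow> nat set \<Rightarrow> complex vec set" where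
  "cspan_cols s Y J = {vec s (\<lambda>i. \<Sum>j\<in>J. c j * complex_of_real (Y $$ (i, j))) | c. True}"

definition rat_vecs :: "nat \<Rightarrow> complex vec set" where
  "rat_vecs s = {q \<in> carrier_vec s. \<forall>i<s. q $ i \<in> \<rat>}"

end

(*
  A lattice point is L r with r integral, and r = Y (L r).  Hence L r vanishes in the
  coordinates outside J exactly when r lies in the real span of the columns Y_j, j in J.
  As the lattice is a group, a coordinate projection is injective on it iff no nonzero
  integral vector lies in the span of the complementary columns; clearing denominators,
  this is the condition on rational vectors in (i) and (ii).

  For (iii) let b = q^T Y, so that q . r = b . (L r).  If b vanishes in the first n
  coordinates, its remaining coordinates form a nonzero functional that is integral on
  pi_perp (L Z^s), which therefore is not dense.  Otherwise the point y = sum_j t^j Y_j,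
  for t outside a countable set, has Z-linearly independent coordinates, and Kronecker's
  theorem makes t y close to Y (0, x) modulo Z^s; applying L gives a lattice point whose
  projection pi_perp is close to x.  Finally, a complex y as in (iii) exists iff every
  nonzero integral q has q^T Y_j \<noteq> 0 for some j < n.
*)

theory Submission
  imports Defs
    "HOL-Analysis.Kronecker_Approximation_Theorem"
    "HOL-Computational_Algebra.Polynomial"
begin

hide_type (open) Finite_Cartesian_Product.vec
hide_const (open) Finite_Cartesian_Product.vec
no_notation Finite_Cartesian_Product.vec_nth (infixl \<open>$\<close> 90)
no_notation Inner_Product.inner (infix \<open>\<bullet>\<close> 70)

lemma Rats_common_denominator:
  fixes x :: "'i \<Rightarrow> 'a::field_char_0"
  assumes "finite I" and "\<forall>i\<in>I. x i \<in> \<rat>"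
  shows "\<exists>D::int. D > 0 \<and> (\<forall>i\<in>I. of_int D * x i \<in> \<int>)"
  using assms
proof (induction I rule: finite_induct)
  case empty
  show ?case by (intro exI[of _ 1]) simp
next
  case (insert i I)
  then obtain D where D: "D > 0" "\<forall>j\<in>I. of_int D * x j \<in> \<int>" by auto
  obtain a b where ab: "b > 0" "x i = of_int a / of_int b"
    using insert.prems by (auto elim: Rats_cases')
  have "of_int (D * b) * x j \<in> \<int>" if "j \<in> insert i I" for j
  proof (cases "j = i")
    case True
    then have "of_int (D * b) * x j = of_int (D * a)" using ab by simp
    then show ?thesis by (metis Ints_of_int)
  next
    case False
    then have "of_int (D * b) * x j = of_int b * (of_int D * x j)" by simp
    then show ?thesis using D that False by (metis Ints_mult Ints_of_int insertE)
  qed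
  then show ?case using D ab by (intro exI[of _ "D * b"]) simp
qed

lemma complex_Rats_eq_of_real: "(z::complex) \<in> \<rat> \<Longrightarrow> Re z \<in> \<rat> \<and> z = of_real (Re z)"
  by (auto elim!: Rats_cases' simp: Re_divide_of_real)

lemma countable_carrier_vec: "countable (carrier_vec s :: 'a::countable vec set)"
  by (rule countable_subset[OF _ countable_image[OF countableI_type, of vec_of_list]])
    (auto intro: range_eqI[of _ _ "list_of_vec _"] simp: vec_list)

lemma countable_polys_common_nonroot:
  fixes P :: "real poly set"
  assumes "countable P" and "0 \<notin> P"
  shows "\<exists>t. \<forall>p\<in>P. poly p t \<noteq> 0"
proof -
  have "countable (\<Union>p\<in>P. {t. poly p t = 0})"
    using assms by (intro countable_UN) (auto intro!: countable_finite poly_roots_finite)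
  then have "(\<Union>p\<in>P. {t. poly p t = 0}) \<noteq> UNIV"
    using uncountable_UNIV_real by metis
  then show ?thesis by blast
qed

text \<open>Points on the moment curve \<open>(1, t, t\<^sup>2, \<dots>)\<close> avoid countably many hyperplanes.\<close>
lemma countable_exists_moment_point_nonzero:
  fixes a :: "'q \<Rightarrow> nat \<Rightarrow> real"
  assumes "countable Q" and "\<And>q. q \<in> Q \<Longrightarrow> \<exists>j<n. a q j \<noteq> 0"
  shows "\<exists>t. \<forall>q\<in>Q. (\<Sum>j<n. a q j * t ^ j) \<noteq> 0"
proof -
  define p where "p q = (\<Sum>j<n. monom (a q j) j)" for q
  have "p q \<noteq> 0" if "q \<in> Q" for q
  proof
    assume "p q = 0"
    have "coeff (p q) j = (if j < n then a q j else 0)" for j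
      by (simp add: p_def coeff_sum)
    then have "a q j = 0" if "j < n" for j
      using that \<open>p q = 0\<close> by (metis coeff_0)
    then show False using assms(2)[OF \<open>q \<in> Q\<close>] by blast
  qed
  then have "countable (p ` Q)" and "0 \<notin> p ` Q"
    using assms(1) by auto
  then obtain t where t: "\<forall>r\<in>p ` Q. poly r t \<noteq> 0"
    using countable_polys_common_nonroot by blast
  have "poly (p q) t = (\<Sum>j<n. a q j * t ^ j)" for q
    by (simp add: p_def poly_sum poly_monom)
  with t show ?thesis by auto
qed

lemma Kronecker_approx_int_independent:
  fixes \<theta> \<alpha> :: "nat \<Rightarrow> real"
  assumes indep: "\<And>q :: nat \<Rightarrow> int. (\<Sum>i<m. of_int (q i) * \<theta> i) = 0 \<Longrightarrow> \<forall>i<m. q i = 0"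
    and "\<epsilon> > 0"
  obtains t h where "\<And>i. i < m \<Longrightarrow> \<bar>t * \<theta> i - of_int (h i) - \<alpha> i\<bar> < \<epsilon>"
proof -
  interpret Modules.module "\<lambda>r. (*) (real_of_int r)"
    by (simp add: Modules.module.intro distrib_left mult.commute)
  have inj: "inj_on \<theta> {..<m}"
  proof (rule inj_onI, rule ccontr)
    fix i i' assume ii': "i \<in> {..<m}" "i' \<in> {..<m}" "\<theta> i = \<theta> i'" "i \<noteq> i'"
    define q :: "nat \<Rightarrow> int" where "q k = (if k = i then 1 else 0) - (if k = i' then 1 else 0)" for k
    have "(\<Sum>k<m. of_int (q k) * \<theta> k)
        = (\<Sum>k<m. (if k = i then \<theta> k else 0) - (if k = i' then \<theta> k else 0))"
      by (intro sum.cong) (auto simp: q_def)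
    also have "\<dots> = 0" using ii' by (simp add: sum_subtractf)
    finally have "\<forall>k<m. q k = 0" using indep by blast
    then show False using ii' by (auto simp: q_def)
  qed
  have "\<not> dependent (\<theta> ` {..<m})"
  proof
    assume "dependent (\<theta> ` {..<m})"
    then obtain T u v where T: "finite T" "T \<subseteq> \<theta> ` {..<m}"
      "(\<Sum>v\<in>T. real_of_int (u v) * v) = 0" "v \<in> T" "u v \<noteq> 0"
      unfolding dependent_explicit by blast
    define q where "q i = (if \<theta> i \<in> T then u (\<theta> i) else 0)" for i
    have "(\<Sum>i<m. of_int (q i) * \<theta> i) = (\<Sum>i<m. if \<theta> i \<in> T then of_int (u (\<theta> i)) * \<theta> i else 0)"
      by (intro sum.cong) (auto simp: q_def)
    also have "\<dots> = (\<Sum>i\<in>{i\<in>{..<m}. \<theta> i \<in> T}. of_int (u (\<theta> i)) * \<theta> i)"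
      by (rule sum.inter_filter[symmetric]) simp
    also have "\<dots> = (\<Sum>v\<in>\<theta> ` {i\<in>{..<m}. \<theta> i \<in> T}. of_int (u v) * v)"
      by (subst sum.reindex) (auto intro: inj_on_subset[OF inj])
    also have "\<theta> ` {i\<in>{..<m}. \<theta> i \<in> T} = T" using T(2) by blast
    finally have "\<forall>i<m. q i = 0" using indep T(3) by simp
    moreover obtain i where "i < m" "\<theta> i = v" using T(2,4) by auto
    ultimately show False using T(4,5) by (auto simp: q_def)
  qed
  with inj \<open>\<epsilon> > 0\<close> show ?thesis
    using Kronecker_thm_1 that by blast
qed

lemma abs_index_diff_le_vdist:
  assumes "i < k"
  shows "\<bar>a $ i - x $ i\<bar> \<le> vdist k a x"
proof -
  have "\<bar>a $ i - x $ i\<bar> = sqrt ((a $ i - x $ i)\<^sup>2)" by simp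
  also have "\<dots> \<le> vdist k a x"
    unfolding vdist_def using assms by (intro real_sqrt_le_mono member_le_sum) auto
  finally show ?thesis .
qed

lemma vdist_le_sum_abs: "vdist k a x \<le> (\<Sum>i<k. \<bar>a $ i - x $ i\<bar>)"
  using L2_set_le_sum_abs[of "\<lambda>i. a $ i - x $ i" "{..<k}"] by (simp add: vdist_def L2_set_def)

lemma vdist_le_of_index_diff_le:
  assumes "\<And>i. i < k \<Longrightarrow> \<bar>a $ i - x $ i\<bar> \<le> d"
  shows "vdist k a x \<le> real k * d"
  using vdist_le_sum_abs[of k a x] sum_mono[of "{..<k}" "\<lambda>i. \<bar>a $ i - x $ i\<bar>" "\<lambda>_. d"] assms
  by simp

lemma abs_mult_mat_vec_index_le:
  fixes A :: "real mat"
  assumes A: "A \<in> carrier_mat k m" and v: "v \<in> carrier_vec m" and "i < k"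
    and bound: "\<And>j. j < m \<Longrightarrow> \<bar>v $ j\<bar> \<le> B"
  shows "\<bar>(A *\<^sub>v v) $ i\<bar> \<le> (\<Sum>j<m. \<bar>A $$ (i, j)\<bar>) * B"
proof -
  have "\<bar>(A *\<^sub>v v) $ i\<bar> = \<bar>\<Sum>j<m. A $$ (i, j) * v $ j\<bar>"
    using assms by (simp add: scalar_prod_def atLeast0LessThan)
  also have "\<dots> \<le> (\<Sum>j<m. \<bar>A $$ (i, j)\<bar> * \<bar>v $ j\<bar>)"
    by (rule order_trans[OF sum_abs]) (simp add: abs_mult)
  also have "\<dots> \<le> (\<Sum>j<m. \<bar>A $$ (i, j)\<bar> * B)"
    using bound by (intro sum_mono mult_left_mono) auto
  finally show ?thesis by (simp add: sum_distrib_right)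
qed

text \<open>A nonzero linear functional that is integral on \<open>A\<close> separates \<open>A\<close> from every point
  where it takes the value \<open>1/2\<close>.\<close>
lemma integer_valued_functional_not_dense:
  fixes w :: "real vec"
  assumes w: "w \<in> carrier_vec k" "w \<noteq> 0\<^sub>v k" and int: "\<And>a. a \<in> A \<Longrightarrow> w \<bullet> a \<in> \<int>"
  shows "\<not> dense_in_Rk k A"
proof
  assume dense: "dense_in_Rk k A"
  define W where "W = w \<bullet> w"
  obtain i where i: "i < k" "w $ i \<noteq> 0"
    using w by (metis eq_vecI carrier_vecD index_zero_vec)
  have "0 < (w $ i)\<^sup>2" using i by simp
  also have "\<dots> \<le> W"
    unfolding W_def scalar_prod_def power2_eq_square using w i by (intro member_le_sum) auto
  finally have "W > 0" .
  define x0 where "x0 = (1 / (2 * W)) \<cdot>\<^sub>v w"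
  have x0: "x0 \<in> carrier_vec k" using w by (simp add: x0_def)
  have wx0: "w \<bullet> x0 = 1 / 2"
    using w \<open>W > 0\<close> by (simp add: x0_def W_def)
  define S where "S = (\<Sum>i<k. \<bar>w $ i\<bar>)"
  have "S \<ge> 0" by (simp add: S_def sum_nonneg)
  then have "1 / (2 * (S + 1)) > 0" by simp
  then obtain a where a: "a \<in> A" "vdist k a x0 < 1 / (2 * (S + 1))"
    using dense x0 unfolding dense_in_Rk_def by blast
  have ac: "a \<in> carrier_vec k" using dense a unfolding dense_in_Rk_def by auto
  have "w \<bullet> a - 1 / 2 = (\<Sum>i<k. w $ i * (a $ i - x0 $ i))"
    using wx0 ac x0 by (simp add: scalar_prod_def atLeast0LessThan right_diff_distrib sum_subtractf)
  then have "\<bar>w \<bullet> a - 1 / 2\<bar> \<le> (\<Sum>i<k. \<bar>w $ i\<bar> * vdist k a x0)"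
    by (auto simp: abs_mult
        intro!: order_trans[OF sum_abs] sum_mono mult_left_mono abs_index_diff_le_vdist)
  also have "\<dots> = S * vdist k a x0" by (simp add: S_def sum_distrib_right)
  also have "\<dots> \<le> S * (1 / (2 * (S + 1)))"
    using a \<open>S \<ge> 0\<close> by (intro mult_left_mono) auto
  also have "\<dots> < 1 / 2" using \<open>S \<ge> 0\<close> by (simp add: field_simps)
  finally have "\<bar>w \<bullet> a - 1 / 2\<bar> < 1 / 2" .
  moreover obtain z where "w \<bullet> a = of_int z" using int a by (metis Ints_cases)
  ultimately show False by (cases "z \<le> 0") auto
qed

lemma pi_par_eq_iff: "pi_par n x = pi_par n x' \<longleftrightarrow> (\<forall>i<n. x $ i = x' $ i)"
  by (auto simp: pi_par_def Matrix.vec_eq_iff)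

lemma pi_perp_eq_iff: "pi_perp s n x = pi_perp s n x' \<longleftrightarrow> (\<forall>i\<in>{n..<s}. x $ i = x' $ i)"
  by (auto simp: pi_perp_def Matrix.vec_eq_iff) (metis add_diff_inverse_nat diff_less_mono not_less)

lemma scalar_prod_pi_perp:
  assumes "b \<in> carrier_vec s" and "x \<in> carrier_vec s" and "\<forall>j<n. b $ j = 0"
  shows "pi_perp s n b \<bullet> pi_perp s n x = b \<bullet> x"
proof -
  have "b \<bullet> x = (\<Sum>j\<in>{n..<s}. b $ j * x $ j)"
    using assms by (auto simp: scalar_prod_def intro!: sum.mono_neutral_right)
  also have "\<dots> = (\<Sum>k<s - n. b $ (n + k) * x $ (n + k))"
    by (rule sum.reindex_bij_witness[of _ "\<lambda>k. n + k" "\<lambda>j. j - n"]) auto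
  finally show ?thesis by (simp add: pi_perp_def scalar_prod_def atLeast0LessThan)
qed

definition col_span :: "nat \<Rightarrow> real mat \<Rightarrow> nat set \<Rightarrow> real vec set" where
  "col_span s Y J = {vec s (\<lambda>i. \<Sum>j\<in>J. c j * Y $$ (i, j)) | c. True}"

lemma cspan_cols_inter_rat_vecs_eq_zero_iff:
  "cspan_cols s Y J \<inter> rat_vecs s = {0\<^sub>v s} \<longleftrightarrow> (\<forall>r\<in>int_vecs s. r \<in> col_span s Y J \<longrightarrow> r = 0\<^sub>v s)"
proof
  assume trivial: "cspan_cols s Y J \<inter> rat_vecs s = {0\<^sub>v s}"
  show "\<forall>r\<in>int_vecs s. r \<in> col_span s Y J \<longrightarrow> r = 0\<^sub>v s"
  proof (intro ballI impI)
    fix r assume r: "r \<in> int_vecs s" "r \<in> col_span s Y J"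
    then obtain c where c: "r = vec s (\<lambda>i. \<Sum>j\<in>J. c j * Y $$ (i, j))"
      by (auto simp: col_span_def)
    define z where "z = vec s (\<lambda>i. \<Sum>j\<in>J. complex_of_real (c j) * complex_of_real (Y $$ (i, j)))"
    have "z \<in> cspan_cols s Y J"
      unfolding cspan_cols_def z_def
      by (rule CollectI, rule exI[of _ "\<lambda>j. complex_of_real (c j)"]) simp
    moreover have zr: "z = map_vec complex_of_real r"
      by (intro eq_vecI) (simp_all add: z_def c)
    moreover have "z \<in> rat_vecs s"
      using r by (auto simp: zr rat_vecs_def int_vecs_def Ints_subset_Rats[THEN subsetD])
    ultimately have "map_vec complex_of_real r = 0\<^sub>v s" using trivial by blast
    then show "r = 0\<^sub>v s"
      using r by (intro eq_vecI) (auto simp: int_vecs_def Matrix.vec_eq_iff)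
  qed
next
  assume trivial: "\<forall>r\<in>int_vecs s. r \<in> col_span s Y J \<longrightarrow> r = 0\<^sub>v s"
  have "z = 0\<^sub>v s" if z: "z \<in> cspan_cols s Y J" "z \<in> rat_vecs s" for z
  proof -
    obtain c where c: "z = vec s (\<lambda>i. \<Sum>j\<in>J. c j * complex_of_real (Y $$ (i, j)))"
      using z by (auto simp: cspan_cols_def)
    have rat: "Re (z $ i) \<in> \<rat>" "z $ i = of_real (Re (z $ i))" if "i < s" for i
      using z that complex_Rats_eq_of_real by (auto simp: rat_vecs_def)
    obtain D :: int where D: "D > 0" "\<forall>i\<in>{..<s}. of_int D * Re (z $ i) \<in> \<int>"
      using Rats_common_denominator[of "{..<s}" "\<lambda>i. Re (z $ i)"] rat by auto
    define r where "r = vec s (\<lambda>i. of_int D * Re (z $ i))"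
    have "r = vec s (\<lambda>i. \<Sum>j\<in>J. (of_int D * Re (c j)) * Y $$ (i, j))"
      by (intro eq_vecI) (simp_all add: r_def c Re_sum sum_distrib_left mult.assoc)
    then have "r \<in> col_span s Y J"
      unfolding col_span_def by (intro CollectI exI[of _ "\<lambda>j. of_int D * Re (c j)"]) simp
    moreover have "r \<in> int_vecs s" using D by (simp add: r_def int_vecs_def)
    ultimately have "r = 0\<^sub>v s" using trivial by blast
    then have "Re (z $ i) = 0" if "i < s" for i
      using D(1) that by (simp add: r_def Matrix.vec_eq_iff)
    then show "z = 0\<^sub>v s" using rat(2) c by (intro eq_vecI) auto
  qed
  moreover have "0\<^sub>v s \<in> cspan_cols s Y J"
    unfolding cspan_cols_def by (intro CollectI exI[of _ "\<lambda>_. 0"]) (auto simp: zero_vec_def)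
  moreover have "0\<^sub>v s \<in> rat_vecs s" by (simp add: rat_vecs_def)
  ultimately show "cspan_cols s Y J \<inter> rat_vecs s = {0\<^sub>v s}" by blast
qed

lemma col_comb_eq_mult_mat_vec:
  fixes Y :: "real mat"
  assumes Y: "Y \<in> carrier_mat s s" and J: "J \<subseteq> {..<s}"
  shows "vec s (\<lambda>i. \<Sum>j\<in>J. c j * Y $$ (i, j)) = Y *\<^sub>v vec s (\<lambda>j. if j \<in> J then c j else 0)"
proof (rule eq_vecI)
  fix i assume "i < dim_vec (Y *\<^sub>v vec s (\<lambda>j. if j \<in> J then c j else 0))"
  then have i: "i < s" using Y by simp
  have "(Y *\<^sub>v vec s (\<lambda>j. if j \<in> J then c j else 0)) $ i
      = (\<Sum>j<s. if j \<in> J then c j * Y $$ (i, j) else 0)"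
    using Y i by (auto simp: scalar_prod_def atLeast0LessThan intro!: sum.cong)
  also have "\<dots> = (\<Sum>j\<in>J. c j * Y $$ (i, j))"
    using J by (simp add: sum.If_cases Int_absorb1)
  finally show "vec s (\<lambda>i. \<Sum>j\<in>J. c j * Y $$ (i, j)) $ i
      = (Y *\<^sub>v vec s (\<lambda>j. if j \<in> J then c j else 0)) $ i"
    using i by simp
qed (use Y in simp)

definition row_comb :: "nat \<Rightarrow> int vec \<Rightarrow> real mat \<Rightarrow> nat \<Rightarrow> real" where
  "row_comb s q Y j = (\<Sum>i<s. of_int (q $ i) * Y $$ (i, j))"

lemma int_pairing_col_comb:
  fixes c :: "nat \<Rightarrow> 'a::real_field"
  shows "(\<Sum>i<s. of_int (q $ i) * (\<Sum>j\<in>J. c j * of_real (Y $$ (i, j))))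
    = (\<Sum>j\<in>J. c j * of_real (row_comb s q Y j))"
proof -
  have "(\<Sum>i<s. of_int (q $ i) * (\<Sum>j\<in>J. c j * of_real (Y $$ (i, j))))
      = (\<Sum>j\<in>J. \<Sum>i<s. c j * of_real (of_int (q $ i) * Y $$ (i, j)))"
    by (simp add: sum_distrib_left mult_ac sum.swap[of _ J])
  also have "\<dots> = (\<Sum>j\<in>J. c j * of_real (row_comb s q Y j))"
    by (simp add: row_comb_def sum_distrib_left)
  finally show ?thesis .
qed

lemma col_comb_int_independent:
  assumes "\<forall>q\<in>carrier_vec s. q \<noteq> 0\<^sub>v s \<longrightarrow> (\<Sum>j<n. c j * row_comb s q Y j) \<noteq> 0"
    and "(\<Sum>i<s. of_int (q i) * (\<Sum>j<n. c j * Y $$ (i, j))) = 0"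
  shows "\<forall>i<s. q i = 0"
proof (rule ccontr)
  assume "\<not> (\<forall>i<s. q i = 0)"
  then have "vec s q \<in> carrier_vec s" "vec s q \<noteq> 0\<^sub>v s" by (auto simp: Matrix.vec_eq_iff)
  moreover have "(\<Sum>j<n. c j * row_comb s (vec s q) Y j)
      = (\<Sum>i<s. of_int (q i) * (\<Sum>j<n. c j * Y $$ (i, j)))"
    using int_pairing_col_comb[where s = s and Y = Y and q = "vec s q" and J = "{..<n}" and c = c]
    by simp
  ultimately show False using assms by auto
qed

lemma exists_real_comb_row_comb_nonzero:
  assumes "\<And>q. q \<in> carrier_vec s \<Longrightarrow> q \<noteq> 0\<^sub>v s \<Longrightarrow> \<exists>j<n. row_comb s q Y j \<noteq> 0"
  shows "\<exists>c. \<forall>q\<in>carrier_vec s. q \<noteq> 0\<^sub>v s \<longrightarrow> (\<Sum>j<n. c j * row_comb s q Y j) \<noteq> 0"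
proof -
  have "countable (carrier_vec s - {0\<^sub>v s} :: int vec set)"
    using countable_carrier_vec by blast
  then obtain t where "\<forall>q\<in>carrier_vec s - {0\<^sub>v s}. (\<Sum>j<n. row_comb s q Y j * t ^ j) \<noteq> 0"
    using countable_exists_moment_point_nonzero[of _ n "\<lambda>q. row_comb s q Y"] assms by blast
  then show ?thesis by (intro exI[of _ "\<lambda>j. t ^ j"]) (auto simp: mult.commute)
qed

lemma exists_cspan_cols_int_pairing_nonzero_iff:
  "(\<exists>y \<in> cspan_cols s Y {0..<n}. \<forall>q \<in> carrier_vec s. q \<noteq> 0\<^sub>v s \<longrightarrow>
      (\<Sum>i<s. of_int (q $ i) * y $ i) \<noteq> (0::complex))
    \<longleftrightarrow> (\<forall>q\<in>carrier_vec s. q \<noteq> 0\<^sub>v s \<longrightarrow> (\<exists>j<n. row_comb s q Y j \<noteq> 0))"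
proof
  assume "\<exists>y \<in> cspan_cols s Y {0..<n}. \<forall>q \<in> carrier_vec s. q \<noteq> 0\<^sub>v s \<longrightarrow>
      (\<Sum>i<s. of_int (q $ i) * y $ i) \<noteq> (0::complex)"
  then obtain c where "\<forall>q\<in>carrier_vec s. q \<noteq> 0\<^sub>v s \<longrightarrow>
      (\<Sum>j\<in>{0..<n}. c j * of_real (row_comb s q Y j)) \<noteq> (0::complex)"
    by (auto simp: cspan_cols_def int_pairing_col_comb)
  then show "\<forall>q\<in>carrier_vec s. q \<noteq> 0\<^sub>v s \<longrightarrow> (\<exists>j<n. row_comb s q Y j \<noteq> 0)"
    by fastforce
next
  assume "\<forall>q\<in>carrier_vec s. q \<noteq> 0\<^sub>v s \<longrightarrow> (\<exists>j<n. row_comb s q Y j \<noteq> 0)"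
  then obtain c where c: "\<forall>q\<in>carrier_vec s. q \<noteq> 0\<^sub>v s \<longrightarrow> (\<Sum>j<n. c j * row_comb s q Y j) \<noteq> 0"
    using exists_real_comb_row_comb_nonzero by blast
  define y where "y = vec s (\<lambda>i. \<Sum>j\<in>{0..<n}. complex_of_real (c j) * complex_of_real (Y $$ (i, j)))"
  have "y \<in> cspan_cols s Y {0..<n}"
    unfolding cspan_cols_def y_def
    by (rule CollectI, rule exI[of _ "\<lambda>j. complex_of_real (c j)"]) simp
  moreover have "(\<Sum>i<s. of_int (q $ i) * y $ i) \<noteq> 0" if "q \<in> carrier_vec s" "q \<noteq> 0\<^sub>v s" for q
  proof -
    have "(\<Sum>i<s. of_int (q $ i) * y $ i) = (\<Sum>j<n. of_real (c j) * of_real (row_comb s q Y j))"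
      by (simp add: y_def int_pairing_col_comb atLeast0LessThan)
    also have "\<dots> = of_real (\<Sum>j<n. c j * row_comb s q Y j)" by simp
    finally show ?thesis using c that by (metis of_real_eq_0_iff)
  qed
  ultimately show "\<exists>y \<in> cspan_cols s Y {0..<n}. \<forall>q \<in> carrier_vec s. q \<noteq> 0\<^sub>v s \<longrightarrow>
      (\<Sum>i<s. of_int (q $ i) * y $ i) \<noteq> (0::complex)"
    by blast
qed

locale inverse_mats =
  fixes s :: nat and L Y :: "real mat"
  assumes L_carrier: "L \<in> carrier_mat s s" and Y_carrier: "Y \<in> carrier_mat s s"
    and L_mult_Y: "L * Y = 1\<^sub>m s" and Y_mult_L: "Y * L = 1\<^sub>m s"
begin

lemma L_Y_mult_vec: "c \<in> carrier_vec s \<Longrightarrow> L *\<^sub>v (Y *\<^sub>v c) = c"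
  using L_carrier Y_carrier L_mult_Y by (simp flip: assoc_mult_mat_vec)

lemma Y_L_mult_vec: "x \<in> carrier_vec s \<Longrightarrow> Y *\<^sub>v (L *\<^sub>v x) = x"
  using L_carrier Y_carrier Y_mult_L by (simp flip: assoc_mult_mat_vec)

lemma L_mult_col_comb:
  assumes "J \<subseteq> {..<s}" and "k < s"
  shows "(L *\<^sub>v vec s (\<lambda>i. \<Sum>j\<in>J. c j * Y $$ (i, j))) $ k = (if k \<in> J then c k else 0)"
  using assms by (simp add: col_comb_eq_mult_mat_vec[OF Y_carrier] L_Y_mult_vec)

lemma mem_col_span_iff:
  assumes J: "J \<subseteq> {..<s}" and x: "x \<in> carrier_vec s"
  shows "x \<in> col_span s Y J \<longleftrightarrow> (\<forall>k\<in>{..<s} - J. (L *\<^sub>v x) $ k = 0)"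
proof
  assume "x \<in> col_span s Y J"
  then show "\<forall>k\<in>{..<s} - J. (L *\<^sub>v x) $ k = 0"
    using J by (auto simp: col_span_def L_mult_col_comb)
next
  assume zero: "\<forall>k\<in>{..<s} - J. (L *\<^sub>v x) $ k = 0"
  have "vec s (\<lambda>j. if j \<in> J then (L *\<^sub>v x) $ j else 0) = L *\<^sub>v x"
    using zero L_carrier by (intro eq_vecI) auto
  then have "x = vec s (\<lambda>i. \<Sum>j\<in>J. (L *\<^sub>v x) $ j * Y $$ (i, j))"
    using J x by (simp add: col_comb_eq_mult_mat_vec[OF Y_carrier] Y_L_mult_vec)
  then show "x \<in> col_span s Y J" unfolding col_span_def by blast
qed

lemma inj_on_lattice_iff:
  assumes K: "K \<subseteq> {..<s}"
    and f: "\<And>x x'. x \<in> carrier_vec s \<Longrightarrow> x' \<in> carrier_vec s \<Longrightarrow> f x = f x' \<longleftrightarrow> (\<forall>i\<in>K. x $ i = x' $ i)"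
  shows "inj_on f (lattice_of s L) \<longleftrightarrow> (\<forall>r\<in>int_vecs s. (\<forall>i\<in>K. (L *\<^sub>v r) $ i = 0) \<longrightarrow> r = 0\<^sub>v s)"
proof
  assume inj: "inj_on f (lattice_of s L)"
  show "\<forall>r\<in>int_vecs s. (\<forall>i\<in>K. (L *\<^sub>v r) $ i = 0) \<longrightarrow> r = 0\<^sub>v s"
  proof (intro ballI impI)
    fix r assume r: "r \<in> int_vecs s" and zero: "\<forall>i\<in>K. (L *\<^sub>v r) $ i = 0"
    have rc: "r \<in> carrier_vec s" using r by (simp add: int_vecs_def)
    have "0\<^sub>v s \<in> int_vecs s" by (simp add: int_vecs_def)
    then have "L *\<^sub>v r \<in> lattice_of s L" "L *\<^sub>v 0\<^sub>v s \<in> lattice_of s L"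
      using r by (auto simp: lattice_of_def)
    moreover have "f (L *\<^sub>v r) = f (L *\<^sub>v 0\<^sub>v s)"
      using f[of "L *\<^sub>v r" "L *\<^sub>v 0\<^sub>v s"] zero K L_carrier rc by auto
    ultimately have "L *\<^sub>v r = L *\<^sub>v 0\<^sub>v s" using inj by (meson inj_onD)
    then show "r = 0\<^sub>v s" using rc by (metis Y_L_mult_vec zero_carrier_vec)
  qed
next
  assume trivial: "\<forall>r\<in>int_vecs s. (\<forall>i\<in>K. (L *\<^sub>v r) $ i = 0) \<longrightarrow> r = 0\<^sub>v s"
  show "inj_on f (lattice_of s L)"
  proof (rule inj_onI)
    fix x x' assume "x \<in> lattice_of s L" "x' \<in> lattice_of s L" and fx: "f x = f x'"
    then obtain r r' where r: "r \<in> int_vecs s" "r' \<in> int_vecs s"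
      and x: "x = L *\<^sub>v r" "x' = L *\<^sub>v r'"
      by (auto simp: lattice_of_def)
    have rc: "r \<in> carrier_vec s" "r' \<in> carrier_vec s" using r by (auto simp: int_vecs_def)
    have "r - r' \<in> int_vecs s" using r by (auto simp: int_vecs_def)
    moreover have "L *\<^sub>v (r - r') = x - x'"
      using x rc L_carrier by (simp add: mult_minus_distrib_mat_vec)
    moreover have "(x - x') $ i = 0" if "i \<in> K" for i
    proof -
      have "i < s" using K that by auto
      moreover have "(L *\<^sub>v r) $ i = (L *\<^sub>v r') $ i" using f[of x x'] fx x rc L_carrier that by auto
      ultimately show ?thesis using x L_carrier by simp
    qed
    ultimately have "r - r' = 0\<^sub>v s" using trivial by auto
    then have "r = r'" using rc by (intro eq_vecI) (auto simp: Matrix.vec_eq_iff)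
    then show "x = x'" using x by simp
  qed
qed

lemma inj_on_lattice_iff_cspan_cols:
  assumes J: "J \<subseteq> {..<s}"
    and f: "\<And>x x'. x \<in> carrier_vec s \<Longrightarrow> x' \<in> carrier_vec s \<Longrightarrow>
      f x = f x' \<longleftrightarrow> (\<forall>i\<in>{..<s} - J. x $ i = x' $ i)"
  shows "inj_on f (lattice_of s L) \<longleftrightarrow> cspan_cols s Y J \<inter> rat_vecs s = {0\<^sub>v s}"
proof -
  have "inj_on f (lattice_of s L)
      \<longleftrightarrow> (\<forall>r\<in>int_vecs s. (\<forall>i\<in>{..<s} - J. (L *\<^sub>v r) $ i = 0) \<longrightarrow> r = 0\<^sub>v s)"
    by (rule inj_on_lattice_iff) (use f in auto)
  also have "\<dots> \<longleftrightarrow> (\<forall>r\<in>int_vecs s. r \<in> col_span s Y J \<longrightarrow> r = 0\<^sub>v s)"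
    using mem_col_span_iff[OF J] by (auto simp: int_vecs_def)
  also have "\<dots> \<longleftrightarrow> cspan_cols s Y J \<inter> rat_vecs s = {0\<^sub>v s}"
    by (rule cspan_cols_inter_rat_vecs_eq_zero_iff[symmetric])
  finally show ?thesis .
qed

lemma row_comb_vec_eq:
  assumes "q \<in> carrier_vec s"
  shows "vec s (row_comb s q Y) = transpose_mat Y *\<^sub>v map_vec of_int q"
  using assms Y_carrier
  by (intro eq_vecI) (auto simp: row_comb_def scalar_prod_def atLeast0LessThan mult.commute)

lemma int_pairing_lattice:
  assumes "q \<in> carrier_vec s" and "r \<in> carrier_vec s"
  shows "map_vec of_int q \<bullet> r = vec s (row_comb s q Y) \<bullet> (L *\<^sub>v r)"
  using assms L_carrier
  by (simp add: row_comb_vec_eq transpose_vec_mult_scalar[OF Y_carrier] Y_L_mult_vec)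

lemma row_comb_zero_imp_zero:
  assumes q: "q \<in> carrier_vec s" and zero: "\<forall>j<s. row_comb s q Y j = 0"
  shows "q = 0\<^sub>v s"
proof (rule eq_vecI)
  fix l assume "l < dim_vec (0\<^sub>v s :: int vec)"
  then have l: "l < s" by simp
  have "vec s (row_comb s q Y) = 0\<^sub>v s" using zero by (intro eq_vecI) auto
  then have "map_vec of_int q \<bullet> unit_vec s l = (0::real)"
    using int_pairing_lattice[OF q, of "unit_vec s l"] L_carrier by simp
  then show "q $ l = 0\<^sub>v s $ l" using q l by (simp add: scalar_prod_right_unit)
qed (use q in simp)

lemma irreducible_imp_row_comb_nonzero:
  assumes irr: "irreducible_cps s n L" and "n \<le> s" and q: "q \<in> carrier_vec s" "q \<noteq> 0\<^sub>v s"
  shows "\<exists>j<n. row_comb s q Y j \<noteq> 0"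
proof (rule ccontr)
  assume none: "\<not> (\<exists>j<n. row_comb s q Y j \<noteq> 0)"
  define b where "b = vec s (row_comb s q Y)"
  have low: "\<forall>j<n. b $ j = 0" using none \<open>n \<le> s\<close> by (auto simp: b_def)
  have "pi_perp s n b \<noteq> 0\<^sub>v (s - n)"
  proof
    assume "pi_perp s n b = 0\<^sub>v (s - n)"
    then have "row_comb s q Y j = 0" if "j < s" for j
    proof (cases "j < n")
      case True
      then show ?thesis using low[rule_format, OF True] that by (simp add: b_def)
    next
      case False
      then obtain k where k: "j = n + k" by (metis le_iff_add not_less)
      then have "pi_perp s n b $ k = 0"
        using \<open>pi_perp s n b = 0\<^sub>v (s - n)\<close> that by simp
      then show ?thesis using that k by (simp add: b_def pi_perp_def)
    qed
    then show False using row_comb_zero_imp_zero q by blast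
  qed
  moreover have "pi_perp s n b \<bullet> a \<in> \<int>" if a_in: "a \<in> pi_perp s n ` lattice_of s L" for a
  proof -
    obtain r where r: "r \<in> int_vecs s" and a: "a = pi_perp s n (L *\<^sub>v r)"
      using a_in unfolding lattice_of_def by blast
    have rc: "r \<in> carrier_vec s" using r by (simp add: int_vecs_def)
    have "pi_perp s n b \<bullet> a = b \<bullet> (L *\<^sub>v r)"
      using scalar_prod_pi_perp[of b s "L *\<^sub>v r" n] low L_carrier rc by (simp add: a b_def)
    also have "\<dots> = map_vec of_int q \<bullet> r" using int_pairing_lattice q rc by (simp add: b_def)
    also have "\<dots> \<in> \<int>"
      using r q by (auto simp: scalar_prod_def int_vecs_def intro!: Ints_sum Ints_mult)
    finally show ?thesis .
  qed
  ultimately have "\<not> irreducible_cps s n L"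
    unfolding irreducible_cps_def
    by (intro integer_valued_functional_not_dense) (auto simp: pi_perp_def)
  with irr show False by contradiction
qed

text \<open>In \<open>close\<close> the first sum is a combination of the first \<open>n\<close> columns of \<open>Y\<close> and the
  second is \<open>Y (0, x)\<close>; so in its last \<open>s - n\<close> coordinates, \<open>L\<close> applied to the error vector
  equals \<open>L (-h)\<close> minus \<open>x\<close>.\<close>
lemma pi_perp_lattice_point_close:
  assumes "n \<le> s" and x: "x \<in> carrier_vec (s - n)" and k: "k < s - n"
    and close: "\<And>i. i < s \<Longrightarrow>
      \<bar>t * (\<Sum>j<n. c j * Y $$ (i, j)) - of_int (h i) - (\<Sum>j\<in>{n..<s}. x $ (j - n) * Y $$ (i, j))\<bar> \<le> \<delta>"
  shows "\<bar>pi_perp s n (L *\<^sub>v vec s (\<lambda>i. - of_int (h i))) $ k - x $ k\<bar>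
    \<le> (\<Sum>l<s. \<bar>L $$ (n + k, l)\<bar>) * \<delta>"
proof -
  define \<theta> where "\<theta> = vec s (\<lambda>i. \<Sum>j\<in>{..<n}. c j * Y $$ (i, j))"
  define \<alpha> where "\<alpha> = vec s (\<lambda>i. \<Sum>j\<in>{n..<s}. x $ (j - n) * Y $$ (i, j))"
  define r where "r = vec s (\<lambda>i. - of_int (h i) :: real)"
  have p: "n + k < s" using k by simp
  have vecs: "\<theta> \<in> carrier_vec s" "\<alpha> \<in> carrier_vec s" "r \<in> carrier_vec s"
    by (simp_all add: \<theta>_def \<alpha>_def r_def)
  have "(L *\<^sub>v (t \<cdot>\<^sub>v \<theta> + r - \<alpha>)) $ (n + k)
      = t * (L *\<^sub>v \<theta>) $ (n + k) + (L *\<^sub>v r) $ (n + k) - (L *\<^sub>v \<alpha>) $ (n + k)"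
    using vecs L_carrier p
    by (simp add: mult_minus_distrib_mat_vec mult_add_distrib_mat_vec mult_mat_vec)
  also have "\<dots> = pi_perp s n (L *\<^sub>v r) $ k - x $ k"
  proof -
    have "{n..<s} \<subseteq> {..<s}" by auto
    from L_mult_col_comb[OF this p, of "\<lambda>j. x $ (j - n)"] have "(L *\<^sub>v \<alpha>) $ (n + k) = x $ k"
      using p by (simp add: \<alpha>_def)
    then show ?thesis using p k by (simp add: \<theta>_def L_mult_col_comb pi_perp_def)
  qed
  finally have eq: "(L *\<^sub>v (t \<cdot>\<^sub>v \<theta> + r - \<alpha>)) $ (n + k) = pi_perp s n (L *\<^sub>v r) $ k - x $ k" .
  have "\<bar>(L *\<^sub>v (t \<cdot>\<^sub>v \<theta> + r - \<alpha>)) $ (n + k)\<bar> \<le> (\<Sum>l<s. \<bar>L $$ (n + k, l)\<bar>) * \<delta>"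
    using close vecs
    by (intro abs_mult_mat_vec_index_le[OF L_carrier _ p]) (auto simp: \<theta>_def \<alpha>_def r_def)
  then show ?thesis using eq by (simp add: r_def)
qed

lemma irreducible_if_row_comb_independent:
  assumes "n \<le> s"
    and indep: "\<forall>q\<in>carrier_vec s. q \<noteq> 0\<^sub>v s \<longrightarrow> (\<Sum>j<n. c j * row_comb s q Y j) \<noteq> 0"
  shows "irreducible_cps s n L"
  unfolding irreducible_cps_def dense_in_Rk_def
proof (intro conjI ballI allI impI)
  show "pi_perp s n ` lattice_of s L \<subseteq> carrier_vec (s - n)" by (auto simp: pi_perp_def)
  fix x :: "real vec" and \<epsilon> :: real assume x: "x \<in> carrier_vec (s - n)" and "\<epsilon> > 0"
  define M where "M = 1 + (\<Sum>p<s. \<Sum>l<s. \<bar>L $$ (p, l)\<bar>)"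
  have "M \<ge> 1" by (simp add: M_def sum_nonneg)
  define \<delta> where "\<delta> = \<epsilon> / (M * (real (s - n) + 1))"
  have "\<delta> > 0" using \<open>\<epsilon> > 0\<close> \<open>M \<ge> 1\<close> by (simp add: \<delta>_def)
  define \<theta> where "\<theta> i = (\<Sum>j<n. c j * Y $$ (i, j))" for i
  have \<theta>_indep: "\<forall>i<s. q i = 0" if "(\<Sum>i<s. of_int (q i) * \<theta> i) = 0" for q :: "nat \<Rightarrow> int"
    using col_comb_int_independent[OF indep] that by (simp add: \<theta>_def)
  obtain t h where th: "\<And>i. i < s \<Longrightarrow>
      \<bar>t * \<theta> i - of_int (h i) - (\<Sum>j\<in>{n..<s}. x $ (j - n) * Y $$ (i, j))\<bar> < \<delta>"
    using Kronecker_approx_int_independent[where m = s and \<theta> = \<theta> and \<epsilon> = \<delta>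
        and \<alpha> = "\<lambda>i. \<Sum>j\<in>{n..<s}. x $ (j - n) * Y $$ (i, j)", OF \<theta>_indep \<open>\<delta> > 0\<close>]
    by blast
  define a where "a = pi_perp s n (L *\<^sub>v vec s (\<lambda>i. - of_int (h i)))"
  have "vec s (\<lambda>i. - of_int (h i)) \<in> int_vecs s" by (simp add: int_vecs_def)
  then have a_in: "a \<in> pi_perp s n ` lattice_of s L"
    unfolding a_def lattice_of_def by blast
  have "\<bar>a $ k - x $ k\<bar> \<le> M * \<delta>" if "k < s - n" for k
  proof -
    have "\<bar>a $ k - x $ k\<bar> \<le> (\<Sum>l<s. \<bar>L $$ (n + k, l)\<bar>) * \<delta>"
      unfolding a_def using th
      by (intro pi_perp_lattice_point_close[OF \<open>n \<le> s\<close> x that, where t = t and c = c])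
        (auto simp: \<theta>_def less_imp_le)
    also have "\<dots> \<le> M * \<delta>"
    proof -
      have "(\<Sum>l<s. \<bar>L $$ (n + k, l)\<bar>) \<le> (\<Sum>p<s. \<Sum>l<s. \<bar>L $$ (p, l)\<bar>)"
        using that by (intro member_le_sum[of "n + k" _ "\<lambda>p. \<Sum>l<s. \<bar>L $$ (p, l)\<bar>"])
          (auto intro: sum_nonneg)
      then show ?thesis using \<open>\<delta> > 0\<close> by (simp add: M_def)
    qed
    finally show ?thesis .
  qed
  then have "vdist (s - n) a x \<le> real (s - n) * (M * \<delta>)"
    by (rule vdist_le_of_index_diff_le)
  also have "\<dots> = \<epsilon> * (real (s - n) / (real (s - n) + 1))"
    using \<open>M \<ge> 1\<close> by (simp add: \<delta>_def divide_simps)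
  also have "\<dots> < \<epsilon>"
    using \<open>\<epsilon> > 0\<close> by (simp add: field_simps)
  finally show "\<exists>a\<in>pi_perp s n ` lattice_of s L. vdist (s - n) a x < \<epsilon>"
    using a_in by blast
qed

lemma irreducible_iff_row_comb_nonzero:
  assumes "n \<le> s"
  shows "irreducible_cps s n L \<longleftrightarrow> (\<forall>q\<in>carrier_vec s. q \<noteq> 0\<^sub>v s \<longrightarrow> (\<exists>j<n. row_comb s q Y j \<noteq> 0))"
proof
  assume "irreducible_cps s n L"
  then show "\<forall>q\<in>carrier_vec s. q \<noteq> 0\<^sub>v s \<longrightarrow> (\<exists>j<n. row_comb s q Y j \<noteq> 0)"
    using irreducible_imp_row_comb_nonzero assms by blast
next
  assume "\<forall>q\<in>carrier_vec s. q \<noteq> 0\<^sub>v s \<longrightarrow> (\<exists>j<n. row_comb s q Y j \<noteq> 0)"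
  then obtain c where "\<forall>q\<in>carrier_vec s. q \<noteq> 0\<^sub>v s \<longrightarrow> (\<Sum>j<n. c j * row_comb s q Y j) \<noteq> 0"
    using exists_real_comb_row_comb_nonzero by blast
  then show "irreducible_cps s n L"
    using irreducible_if_row_comb_independent assms by blast
qed

end

theorem proposition6:
  fixes s n :: nat and L Y :: "real mat"
  assumes "1 \<le> n" and "n < s"
    and "L \<in> carrier_mat s s" and "Y \<in> carrier_mat s s"
    and "L * Y = 1\<^sub>m s" and "Y * L = 1\<^sub>m s"
  shows "(non_degenerate s n L \<longleftrightarrow> cspan_cols s Y {n..<s} \<inter> rat_vecs s = {0\<^sub>v s})
       \<and> (aperiodic s n L \<longleftrightarrow> cspan_cols s Y {0..<n} \<inter> rat_vecs s = {0\<^sub>v s})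
       \<and> (irreducible_cps s n L \<longleftrightarrow>
            (\<exists>y \<in> cspan_cols s Y {0..<n}. \<forall>q \<in> carrier_vec s. q \<noteq> 0\<^sub>v s \<longrightarrow>
               (\<Sum>i<s. of_int (q $ i) * y $ i) \<noteq> (0::complex)))"
proof -
  interpret inverse_mats s L Y using assms(3-6) by unfold_locales
  have "non_degenerate s n L \<longleftrightarrow> cspan_cols s Y {n..<s} \<inter> rat_vecs s = {0\<^sub>v s}"
    unfolding non_degenerate_def
    by (rule inj_on_lattice_iff_cspan_cols) (use \<open>n < s\<close> in \<open>auto simp: pi_par_eq_iff\<close>)
  moreover have "aperiodic s n L \<longleftrightarrow> cspan_cols s Y {0..<n} \<inter> rat_vecs s = {0\<^sub>v s}"
    unfolding aperiodic_def
    by (rule inj_on_lattice_iff_cspan_cols) (use \<open>n < s\<close> in \<open>auto simp: pi_perp_eq_iff\<close>)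
  moreover have "irreducible_cps s n L \<longleftrightarrow>
      (\<exists>y \<in> cspan_cols s Y {0..<n}. \<forall>q \<in> carrier_vec s. q \<noteq> 0\<^sub>v s \<longrightarrow>
         (\<Sum>i<s. of_int (q $ i) * y $ i) \<noteq> (0::complex))"
    using \<open>n < s\<close>
    by (simp add: irreducible_iff_row_comb_nonzero exists_cspan_cols_int_pairing_nonzero_iff)
  ultimately show ?thesis by blast
qed

end
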